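(* Consider an instance of $k$-robust set cover with set-dependent inflations (universe $U$ of $n$ elements, $m$ sets, first-stage costs $b$ and second-stage costs $c$ with $b\le c$ componentwise), and a threshold $T\ge0$. Let $\beta\ge36\ln m$, let $S$ be the set of elements $v\in U$ such that the minimum $c$-cost of a set covering $v$ is at least $\beta\frac{T}{k}$, and let $\Phi_T$ be the greedy set cover of $S$ under the costs $b$. Let $\Phi^*$ be the first-stage family of an optimal solution and $T^*$ its second-stage $c$-cost. If $T\ge T^*$ then $b(\Phi_T)\le H_n\cdot(b(\Phi^* )+12\cdot T^* )$.
   Context: $k$-robust set cover with set-dependent inflations: universe $U$, sets $R_1,\dots,R_m$, first-stage costs $b\in\mathbb{R}_+^m$, second-stage costs $c\in\mathbb{R}_+^m$, integer $k\ge1$. A feasible solution is a first-stage family $E_0\subseteq[m]$ and, for every $\omega\subseteq U$ with $|\omega|=k$, a family $E_\omega$ such that sets in $E_0\cup E_\omega$ cover $\omega$; its cost is $b(E_0)+\max_\omega c(E_\omega)$, the second term being the second-stage cost. The greedy set cover algorithm repeatedly picks a set minimizing the ratio of its cost to the number of still-uncovered elements of $S$ it contains. $H_n=\sum_{i=1}^n\frac1i$. *)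

theory Defs
  imports "HOL-Analysis.Analysis"
begin

definition scenarios :: "'a set \<Rightarrow> nat \<Rightarrow> 'a set set" where
  "scenarios U k = {\<omega>. \<omega> \<subseteq> U \<and> card \<omega> = k}"

definition rsc_feasible ::
  "'a set \<Rightarrow> (nat \<Rightarrow> 'a set) \<Rightarrow> nat \<Rightarrow> nat \<Rightarrow> nat set \<Rightarrow> ('a set \<Rightarrow> nat set) \<Rightarrow> bool" where
  "rsc_feasible U R m k E0 E \<longleftrightarrow>
     E0 \<subseteq> {..<m} \<and>
     (\<forall>\<omega>\<in>scenarios U k. E \<omega> \<subseteq> {..<m} \<and> \<omega> \<subseteq> \<Union> (R ` (E0 \<union> E \<omega>)))"

definition second_stage_cost ::
  "'a set \<Rightarrow> nat \<Rightarrow> (nat \<Rightarrow> real) \<Rightarrow> ('a set \<Rightarrow> nat set) \<Rightarrow> real" where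
  "second_stage_cost U k c E = (MAX \<omega>\<in>scenarios U k. sum c (E \<omega>))"

definition rsc_cost ::
  "'a set \<Rightarrow> nat \<Rightarrow> (nat \<Rightarrow> real) \<Rightarrow> (nat \<Rightarrow> real) \<Rightarrow> nat set \<Rightarrow> ('a set \<Rightarrow> nat set) \<Rightarrow> real" where
  "rsc_cost U k b c E0 E = sum b E0 + second_stage_cost U k c E"

definition rsc_optimal ::
  "'a set \<Rightarrow> (nat \<Rightarrow> 'a set) \<Rightarrow> nat \<Rightarrow> nat \<Rightarrow> (nat \<Rightarrow> real) \<Rightarrow> (nat \<Rightarrow> real)
     \<Rightarrow> nat set \<Rightarrow> ('a set \<Rightarrow> nat set) \<Rightarrow> bool" where
  "rsc_optimal U R m k b c E0 E \<longleftrightarrow>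
     rsc_feasible U R m k E0 E \<and>
     (\<forall>E0' E'. rsc_feasible U R m k E0' E' \<longrightarrow> rsc_cost U k b c E0 E \<le> rsc_cost U k b c E0' E')"

definition min_cover_cost :: "(nat \<Rightarrow> 'a set) \<Rightarrow> nat \<Rightarrow> (nat \<Rightarrow> real) \<Rightarrow> 'a \<Rightarrow> real" where
  "min_cover_cost R m c v = Min (c ` {i. i < m \<and> v \<in> R i})"

text \<open>Greedy set cover (any tie-breaking): greedy_cover R m w X F means that, starting
  with uncovered elements X, some run of the greedy algorithm under costs w outputs the
  family F.\<close>
inductive greedy_cover :: "(nat \<Rightarrow> 'a set) \<Rightarrow> nat \<Rightarrow> (nat \<Rightarrow> real) \<Rightarrow> 'a set \<Rightarrow> nat set \<Rightarrow> bool"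
  for R m w where
  gc_done: "greedy_cover R m w {} {}"
| gc_step: "\<lbrakk> X \<noteq> {}; i < m; R i \<inter> X \<noteq> {};
          \<forall>j<m. R j \<inter> X \<noteq> {} \<longrightarrow> w i / real (card (R i \<inter> X)) \<le> w j / real (card (R j \<inter> X));
          greedy_cover R m w (X - R i) F \<rbrakk>
        \<Longrightarrow> greedy_cover R m w X (insert i F)"

end

theory Submission
  imports Defs
begin

text \<open>Greedy pays at most \<open>H_n Q\<close>, \<open>Q = b(\<Phi>*) + 12 T*\<close>, as soon as every nonempty
  \<open>Y \<subseteq> S\<close> meets a set with \<open>b_i / |R_i \<inter> Y| \<le> Q / |Y|\<close>. Suppose every set is charged more
  than \<open>r = Q / |Y|\<close> per element of \<open>Y\<close>. The sets of \<open>\<Phi>*\<close> then cover at most \<open>b(\<Phi>*) / r\<close>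
  elements of \<open>Y\<close>, so the remainder \<open>Y'\<close> has \<open>r |Y'| \<ge> 12 T*\<close>. The recourse sets covering a
  \<open>k\<close>-subset of \<open>Y'\<close> cost at most \<open>T*\<close>, hence cover fewer than \<open>T* / r \<le> |Y'| / 12\<close> elements
  of \<open>Y'\<close>, and as each of them costs at least \<open>\<beta> T / k\<close> there are at most \<open>k / \<beta>\<close> of them.
  Each such family thus contains at most a \<open>12^-k\<close> fraction of the \<open>k\<close>-subsets of \<open>Y'\<close>, yet for
  \<open>\<beta> \<ge> 36 ln m\<close> there are fewer than \<open>12^k\<close> families of at most \<open>k / \<beta>\<close> sets.\<close>

lemma choose_mult_power_le:
  fixes a y k :: nat
  assumes "a \<le> y"
  shows "(a choose k) * y ^ k \<le> (y choose k) * a ^ k"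
proof (induction k)
  case 0
  then show ?case by simp
next
  case (Suc k)
  have a_step: "Suc k * (a choose Suc k) = (a - k) * (a choose k)"
    using times_binomial_minus1_eq[of "Suc k" a] binomial_absorb_comp[of a k] by simp
  have y_step: "Suc k * (y choose Suc k) = (y - k) * (y choose k)"
    using times_binomial_minus1_eq[of "Suc k" y] binomial_absorb_comp[of y k] by simp
  have factor: "(a - k) * y \<le> (y - k) * a"
    using assms by (simp add: diff_mult_distrib2 mult.commute diff_le_mono2)
  have "Suc k * ((a choose Suc k) * y ^ Suc k) = ((a - k) * y) * ((a choose k) * y ^ k)"
    by (subst mult.assoc[symmetric], subst a_step) (simp only: power_Suc mult_ac)
  also have "\<dots> \<le> ((y - k) * a) * ((y choose k) * a ^ k)"
    using factor Suc.IH by (rule mult_mono) auto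
  also have "\<dots> = Suc k * ((y choose Suc k) * a ^ Suc k)"
    by (subst (2) mult.assoc[symmetric], subst y_step) (simp only: power_Suc mult_ac)
  finally show ?case
    by (simp only: mult_le_cancel1)
qed

lemma choose_mult_power_le_choose:
  fixes a y c k :: nat
  assumes "c * a \<le> y" "1 \<le> c"
  shows "(a choose k) * c ^ k \<le> y choose k"
proof (cases "y = 0")
  case True
  then show ?thesis
    using assms by (cases k) auto
next
  case False
  have "a \<le> y"
    using assms by (metis le_trans mult_1 mult_le_mono1)
  then have "(a choose k) * c ^ k * y ^ k \<le> (y choose k) * a ^ k * c ^ k"
    using choose_mult_power_le by (simp add: mult.assoc mult.left_commute)
  also have "\<dots> = (y choose k) * (c * a) ^ k"
    by (simp add: power_mult_distrib)
  also have "\<dots> \<le> (y choose k) * y ^ k"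
    using assms by (intro mult_left_mono power_mono) auto
  finally show ?thesis
    using False by simp
qed

lemma card_ge_power_if_covers_k_subsets:
  fixes Y :: "'a set" and \<D> :: "'a set set" and c k :: nat
  assumes "finite Y" "k \<le> card Y" "finite \<D>" "1 \<le> c"
    and small: "\<And>D. D \<in> \<D> \<Longrightarrow> finite D \<and> c * card D \<le> card Y"
    and covers: "\<And>\<omega>. \<omega> \<subseteq> Y \<Longrightarrow> card \<omega> = k \<Longrightarrow> \<exists>D\<in>\<D>. \<omega> \<subseteq> D"
  shows "c ^ k \<le> card \<D>"
proof -
  have "card Y choose k = card {\<omega>. \<omega> \<subseteq> Y \<and> card \<omega> = k}"
    using n_subsets[OF \<open>finite Y\<close>] by simp
  also have "\<dots> \<le> card (\<Union>D\<in>\<D>. {\<omega>. \<omega> \<subseteq> D \<and> card \<omega> = k})"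
    using covers small \<open>finite \<D>\<close> by (intro card_mono) (auto intro: finite_subset[of _ "Pow _"])
  also have "\<dots> \<le> (\<Sum>D\<in>\<D>. card {\<omega>. \<omega> \<subseteq> D \<and> card \<omega> = k})"
    using \<open>finite \<D>\<close> by (rule card_UN_le)
  also have "\<dots> = (\<Sum>D\<in>\<D>. card D choose k)"
    using small by (intro sum.cong refl n_subsets) auto
  finally have "(card Y choose k) * c ^ k \<le> (\<Sum>D\<in>\<D>. (card D choose k) * c ^ k)"
    by (simp add: sum_distrib_right[symmetric])
  also have "\<dots> \<le> (\<Sum>D\<in>\<D>. card Y choose k)"
    using small \<open>1 \<le> c\<close> by (intro sum_mono choose_mult_power_le_choose) auto
  also have "\<dots> = card \<D> * (card Y choose k)"
    by simp
  finally show ?thesis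
    using zero_less_binomial[OF \<open>k \<le> card Y\<close>] by simp
qed

lemma card_subsets_card_le:
  assumes "finite A"
  shows "card {F. F \<subseteq> A \<and> card F \<le> J} \<le> (card A + 1) ^ J"
proof (induction J)
  case 0
  have "{F. F \<subseteq> A \<and> card F \<le> 0} = {{}}"
    using assms by (auto dest: finite_subset)
  then show ?case by simp
next
  case (Suc J)
  define G where "G = {F. F \<subseteq> A \<and> card F \<le> J}"
  have "finite G"
    unfolding G_def using assms by (auto intro: finite_subset[of _ "Pow A"])
  have "{F. F \<subseteq> A \<and> card F \<le> Suc J} \<subseteq> G \<union> (\<Union>a\<in>A. insert a ` G)"
  proof
    fix F
    assume F: "F \<in> {F. F \<subseteq> A \<and> card F \<le> Suc J}"
    show "F \<in> G \<union> (\<Union>a\<in>A. insert a ` G)"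
    proof (cases "F = {}")
      case True
      then show ?thesis unfolding G_def by auto
    next
      case False
      then obtain a where "a \<in> F" by auto
      moreover have "finite F"
        using F assms finite_subset by auto
      ultimately have "F - {a} \<in> G" "F = insert a (F - {a})"
        using F unfolding G_def by auto
      then show ?thesis
        using \<open>a \<in> F\<close> F by blast
    qed
  qed
  then have "card {F. F \<subseteq> A \<and> card F \<le> Suc J} \<le> card (G \<union> (\<Union>a\<in>A. insert a ` G))"
    using \<open>finite G\<close> assms by (intro card_mono) auto
  also have "\<dots> \<le> card G + (\<Sum>a\<in>A. card (insert a ` G))"
    using card_Un_le[of G "\<Union>a\<in>A. insert a ` G"] card_UN_le[OF assms, of "\<lambda>a. insert a ` G"]
    by linarith
  also have "\<dots> \<le> card G + (\<Sum>a\<in>A. card G)"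
    by (intro add_left_mono sum_mono card_image_le \<open>finite G\<close>)
  also have "\<dots> = (card A + 1) * card G"
    by simp
  also have "\<dots> \<le> (card A + 1) ^ Suc J"
    using mult_le_mono2[OF Suc.IH, of "card A + 1"] unfolding G_def by simp
  finally show ?case .
qed

lemma succ_power_lt_12_power:
  fixes m J k :: nat and \<beta> :: real
  assumes "2 \<le> m" "36 * ln (real m) \<le> \<beta>" "real J * \<beta> \<le> real k" "1 \<le> k"
  shows "(m + 1) ^ J < 12 ^ k"
proof -
  have "ln (real m) > 0"
    using assms(1) by simp
  with assms(2) have "\<beta> > 0"
    by linarith
  have "m + 1 \<le> m * m"
    using assms(1) mult_le_mono1[of 2 m m] by linarith
  then have "real ((m + 1) ^ J) \<le> real m ^ (2 * J)"
    by (simp add: power_mult power2_eq_square power_mono flip: of_nat_mult)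
  also have "\<dots> = exp (real (2 * J) * ln (real m))"
    using assms(1) exp_of_nat_mult[of "2 * J" "ln (real m)"] by simp
  also have "\<dots> \<le> exp (real k)"
  proof -
    have "real J * ln (real m) * 36 \<le> real J * \<beta>"
      using assms(2) by (simp add: mult.assoc mult_left_mono)
    then show ?thesis
      using assms(3) \<open>ln (real m) > 0\<close> by simp
  qed
  also have "\<dots> = exp 1 ^ k"
    using exp_of_nat_mult[of k 1] by simp
  also have "\<dots> < 12 ^ k"
    using exp_le \<open>1 \<le> k\<close> by (intro power_strict_mono) auto
  finally show ?thesis
    by (simp only: of_nat_less_numeral_power_cancel_iff)
qed

lemma card_light_families_lt:
  fixes m k :: nat and \<beta> :: real
  assumes beta: "\<beta> \<ge> 36 * ln (real m)" and "1 \<le> k"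
  shows "card {F. F \<subseteq> {..<m} \<and> real (card F) * \<beta> \<le> real k} < 12 ^ k"
proof (cases "m \<le> 1")
  case True
  \<comment> \<open>here \<open>\<beta>\<close> may be \<open>0\<close>, so only the trivial count is available\<close>
  have "card {F. F \<subseteq> {..<m} \<and> real (card F) * \<beta> \<le> real k} \<le> card (Pow {..<m})"
    by (intro card_mono) auto
  also have "\<dots> \<le> 2"
    using True by (auto simp: card_Pow le_Suc_eq)
  also have "2 < (12::nat) ^ k"
    using power_increasing[of 1 k "12::nat"] \<open>1 \<le> k\<close> by simp
  finally show ?thesis .
next
  case False
  then have "ln (real m) > 0"
    by simp
  with beta have "\<beta> > 0"
    by linarith
  define J where "J = nat \<lfloor>real k / \<beta>\<rfloor>"
  have "real J \<le> real k / \<beta>"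
    unfolding J_def using \<open>\<beta> > 0\<close> by (cases "\<lfloor>real k / \<beta>\<rfloor> \<ge> 0") auto
  then have "real J * \<beta> \<le> real k"
    using \<open>\<beta> > 0\<close> by (simp add: field_simps)
  have "{F. F \<subseteq> {..<m} \<and> real (card F) * \<beta> \<le> real k} \<subseteq> {F. F \<subseteq> {..<m} \<and> card F \<le> J}"
  proof safe
    fix F
    assume "real (card F) * \<beta> \<le> real k"
    then have "real (card F) \<le> real k / \<beta>"
      using \<open>\<beta> > 0\<close> by (simp add: field_simps)
    then show "card F \<le> J"
      unfolding J_def by (simp add: le_nat_iff le_floor_iff)
  qed
  then have "card {F. F \<subseteq> {..<m} \<and> real (card F) * \<beta> \<le> real k}
      \<le> card {F. F \<subseteq> {..<m} \<and> card F \<le> J}"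
    by (intro card_mono) (auto intro: finite_subset[of _ "Pow {..<m}"])
  also have "\<dots> \<le> (m + 1) ^ J"
    using card_subsets_card_le[of "{..<m}" J] by simp
  also have "\<dots> < 12 ^ k"
    using False beta \<open>real J * \<beta> \<le> real k\<close> \<open>1 \<le> k\<close> by (intro succ_power_lt_12_power) auto
  finally show ?thesis .
qed

lemma card_covered_le_sum_card:
  assumes "finite F"
  shows "card (Y \<inter> \<Union>(R ` F)) \<le> (\<Sum>i\<in>F. card (R i \<inter> Y))"
proof -
  have "Y \<inter> \<Union>(R ` F) = (\<Union>i\<in>F. R i \<inter> Y)"
    by auto
  then show ?thesis
    using card_UN_le[OF assms, of "\<lambda>i. R i \<inter> Y"] by simp
qed

lemma weighted_card_covered_less_sum:
  fixes R :: "nat \<Rightarrow> 'a set" and w :: "nat \<Rightarrow> real" and r :: real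
  assumes "finite F" "0 \<le> r"
    and nonneg: "\<And>i. i \<in> F \<Longrightarrow> 0 \<le> w i"
    and dense: "\<And>i. i \<in> F \<Longrightarrow> R i \<inter> Y \<noteq> {} \<Longrightarrow> r * card (R i \<inter> Y) < w i"
    and "Y \<inter> \<Union>(R ` F) \<noteq> {}"
  shows "r * card (Y \<inter> \<Union>(R ` F)) < sum w F"
proof -
  obtain j where j: "j \<in> F" "R j \<inter> Y \<noteq> {}"
    using \<open>Y \<inter> \<Union>(R ` F) \<noteq> {}\<close> by auto
  have "real (card (Y \<inter> \<Union>(R ` F))) \<le> (\<Sum>i\<in>F. real (card (R i \<inter> Y)))"
    using card_covered_le_sum_card[OF \<open>finite F\<close>, of Y R] by (simp flip: of_nat_sum)
  then have "r * card (Y \<inter> \<Union>(R ` F)) \<le> r * (\<Sum>i\<in>F. real (card (R i \<inter> Y)))"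
    using \<open>0 \<le> r\<close> by (rule mult_left_mono)
  also have "\<dots> = (\<Sum>i\<in>F. r * card (R i \<inter> Y))"
    by (simp add: sum_distrib_left)
  also have "\<dots> < sum w F"
  proof (rule sum_strict_mono_ex1[OF \<open>finite F\<close>])
    show "\<forall>i\<in>F. r * card (R i \<inter> Y) \<le> w i"
      using nonneg dense by (fastforce intro: less_imp_le)
    show "\<exists>i\<in>F. r * card (R i \<inter> Y) < w i"
      using j dense by blast
  qed
  finally show ?thesis .
qed

lemma harm_diff_add_le:
  assumes "t \<le> n"
  shows "harm (n - t) + real t / real n \<le> (harm n :: real)"
  using assms
proof (induction t)
  case 0
  then show ?case by simp
next
  case (Suc t)
  have "harm (n - t) = harm (n - Suc t) + 1 / real (n - t)"
    using harm_Suc[of "n - Suc t"] Suc.prems by (simp add: Suc_diff_Suc inverse_eq_divide)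
  moreover have "1 / real n \<le> 1 / real (n - t)"
    using Suc.prems by (simp add: frac_le)
  ultimately show ?case
    using Suc by (simp add: add_divide_distrib)
qed

lemma greedy_cover_subset:
  "greedy_cover R m w X F \<Longrightarrow> F \<subseteq> {..<m}"
  by (induction rule: greedy_cover.induct) auto

lemma greedy_cover_cost_le:
  fixes w :: "nat \<Rightarrow> real"
  assumes "greedy_cover R m w X F" "finite X" "\<forall>i<m. 0 \<le> w i" "0 \<le> Q"
    and "\<And>Y. Y \<subseteq> X \<Longrightarrow> Y \<noteq> {} \<Longrightarrow>
      \<exists>i<m. R i \<inter> Y \<noteq> {} \<and> w i / card (R i \<inter> Y) \<le> Q / card Y"
  shows "sum w F \<le> harm (card X) * Q"
  using assms
proof (induction rule: greedy_cover.induct)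
  case gc_done
  then show ?case by (simp add: harm_def)
next
  case (gc_step X i F)
  define t where "t = card (R i \<inter> X)"
  define n where "n = card X"
  have "sum w F \<le> harm (card (X - R i)) * Q"
  proof (rule gc_step.IH)
    fix Y
    assume "Y \<subseteq> X - R i" "Y \<noteq> {}"
    then show "\<exists>j<m. R j \<inter> Y \<noteq> {} \<and> w j / card (R j \<inter> Y) \<le> Q / card Y"
      using gc_step.prems(4)[of Y] by blast
  qed (use gc_step.prems in auto)
  moreover have "card (X - R i) = n - t"
    using gc_step.prems(1) card_Diff_subset_Int[of X "R i"] unfolding n_def t_def by (simp add: Int_commute)
  ultimately have IH: "sum w F \<le> harm (n - t) * Q"
    by simp
  have "0 < t" "t \<le> n"
    unfolding t_def n_def using gc_step by (auto simp: card_gt_0_iff intro: card_mono)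
  obtain j where j: "j < m" "R j \<inter> X \<noteq> {}" "w j / card (R j \<inter> X) \<le> Q / n"
    using gc_step.prems(4)[of X] gc_step.hyps(1) unfolding n_def by auto
  then have "w i / t \<le> Q / n"
    using gc_step.hyps(4) unfolding t_def by force
  then have w_i: "w i \<le> real t / real n * Q"
    using \<open>0 < t\<close> by (simp add: field_simps)
  have "sum w (insert i F) \<le> w i + sum w F"
    using gc_step.hyps(2) gc_step.prems(2) greedy_cover_subset[OF gc_step.hyps(5)]
    by (auto simp: sum.insert_if finite_subset[of F "{..<m}"])
  also have "\<dots> \<le> (harm (n - t) + real t / real n) * Q"
    using w_i IH by (simp add: distrib_right)
  also have "\<dots> \<le> harm n * Q"
    using harm_diff_add_le[OF \<open>t \<le> n\<close>] gc_step.prems(3) by (intro mult_right_mono)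
  finally show ?case
    unfolding n_def .
qed

lemma light_cover_within:
  fixes Y :: "'a set" and R :: "nat \<Rightarrow> 'a set" and c :: "nat \<Rightarrow> real" and r T \<beta> :: real
  assumes "1 \<le> k" "0 \<le> r"
    and c_nonneg: "\<And>i. i < m \<Longrightarrow> 0 \<le> c i"
    and dense: "\<And>i. i < m \<Longrightarrow> R i \<inter> Y \<noteq> {} \<Longrightarrow> r * card (R i \<inter> Y) < c i"
    and expensive: "\<And>i. i < m \<Longrightarrow> R i \<inter> Y \<noteq> {} \<Longrightarrow> \<beta> * T / k \<le> c i"
    and F: "F \<subseteq> {..<m}" "\<omega> \<subseteq> \<Union>(R ` F)" "sum c F \<le> T"
    and "\<omega> \<subseteq> Y" "\<omega> \<noteq> {}"
  obtains F' where "F' \<subseteq> {..<m}" "\<omega> \<subseteq> Y \<inter> \<Union>(R ` F')" "r * card (Y \<inter> \<Union>(R ` F')) < T"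
    "real (card F') * \<beta> \<le> real k"
proof -
  define F' where "F' = {i \<in> F. R i \<inter> Y \<noteq> {}}"
  have "F' \<subseteq> F" "F' \<subseteq> {..<m}"
    using F(1) unfolding F'_def by auto
  then have "finite F'" "finite F"
    using F(1) by (meson finite_lessThan finite_subset)+
  have covers: "\<omega> \<subseteq> Y \<inter> \<Union>(R ` F')"
  proof
    fix v
    assume "v \<in> \<omega>"
    then obtain i where "i \<in> F" "v \<in> R i" "v \<in> Y"
      using F(2) \<open>\<omega> \<subseteq> Y\<close> by blast
    then show "v \<in> Y \<inter> \<Union>(R ` F')"
      unfolding F'_def by blast
  qed
  have "sum c F' \<le> sum c F"
    using \<open>finite F\<close> \<open>F' \<subseteq> F\<close> F(1) c_nonneg by (intro sum_mono2) auto
  with F(3) have cost: "sum c F' \<le> T"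
    by linarith
  have "r * card (Y \<inter> \<Union>(R ` F')) < sum c F'"
  proof (rule weighted_card_covered_less_sum[OF \<open>finite F'\<close> \<open>0 \<le> r\<close>])
    fix i
    assume "i \<in> F'"
    with \<open>F' \<subseteq> {..<m}\<close> show "0 \<le> c i"
      by (simp add: subset_iff c_nonneg)
  next
    fix i
    assume "i \<in> F'" "R i \<inter> Y \<noteq> {}"
    with \<open>F' \<subseteq> {..<m}\<close> show "r * card (R i \<inter> Y) < c i"
      by (simp add: subset_iff dense)
  next
    show "Y \<inter> \<Union>(R ` F') \<noteq> {}"
      using covers \<open>\<omega> \<noteq> {}\<close> by blast
  qed
  with cost have less: "r * card (Y \<inter> \<Union>(R ` F')) < T"
    by linarith
  moreover have "0 \<le> r * card (Y \<inter> \<Union>(R ` F'))"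
    using \<open>0 \<le> r\<close> by simp
  ultimately have "0 < T"
    by linarith
  have "real (card F') * (\<beta> * T / k) \<le> sum c F'"
    using expensive \<open>F' \<subseteq> {..<m}\<close> unfolding F'_def by (intro sum_bounded_below) auto
  with cost have "real (card F') * (\<beta> * T / k) \<le> T"
    by linarith
  then have "real (card F') * \<beta> \<le> real k"
    using \<open>0 < T\<close> \<open>1 \<le> k\<close> by (simp add: field_simps)
  with \<open>F' \<subseteq> {..<m}\<close> covers less show ?thesis
    by (rule that)
qed

lemma second_stage_density_bound:
  fixes Y :: "'a set" and R :: "nat \<Rightarrow> 'a set" and c :: "nat \<Rightarrow> real" and r T \<beta> :: real
  assumes "finite Y" "Y \<noteq> {}" "1 \<le> k" and beta: "\<beta> \<ge> 36 * ln (real m)" and "0 \<le> r"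
    and c_nonneg: "\<And>i. i < m \<Longrightarrow> 0 \<le> c i"
    and dense: "\<And>i. i < m \<Longrightarrow> R i \<inter> Y \<noteq> {} \<Longrightarrow> r * card (R i \<inter> Y) < c i"
    and expensive: "\<And>i. i < m \<Longrightarrow> R i \<inter> Y \<noteq> {} \<Longrightarrow> \<beta> * T / k \<le> c i"
    and cover: "\<And>\<omega>. \<omega> \<subseteq> Y \<Longrightarrow> card \<omega> \<le> k \<Longrightarrow> \<exists>F\<subseteq>{..<m}. \<omega> \<subseteq> \<Union>(R ` F) \<and> sum c F \<le> T"
  shows "r * card Y < 12 * T"
proof -
  have light_cover: "\<exists>F\<subseteq>{..<m}. \<omega> \<subseteq> Y \<inter> \<Union>(R ` F) \<and> r * card (Y \<inter> \<Union>(R ` F)) < T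
      \<and> real (card F) * \<beta> \<le> real k"
    if \<omega>: "\<omega> \<subseteq> Y" "\<omega> \<noteq> {}" "card \<omega> \<le> k" for \<omega>
  proof -
    obtain F where F: "F \<subseteq> {..<m}" "\<omega> \<subseteq> \<Union>(R ` F)" "sum c F \<le> T"
      using cover[OF \<omega>(1,3)] by blast
    obtain F' where "F' \<subseteq> {..<m}" "\<omega> \<subseteq> Y \<inter> \<Union>(R ` F')" "r * card (Y \<inter> \<Union>(R ` F')) < T"
      "real (card F') * \<beta> \<le> real k"
      by (rule light_cover_within[OF \<open>1 \<le> k\<close> \<open>0 \<le> r\<close> c_nonneg dense expensive F \<omega>(1,2)])
    then show ?thesis
      by blast
  qed
  show ?thesis
  proof (cases "card Y \<le> k")
    case True
    then obtain F where "Y \<subseteq> Y \<inter> \<Union>(R ` F)" "r * card (Y \<inter> \<Union>(R ` F)) < T"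
      using light_cover[OF subset_refl \<open>Y \<noteq> {}\<close>] by blast
    then have "r * card Y < T"
      by (metis Int_absorb2 le_infE)
    moreover have "0 \<le> r * card Y"
      using \<open>0 \<le> r\<close> by simp
    ultimately show ?thesis
      by linarith
  next
    case False
    define light where "light = {F. F \<subseteq> {..<m} \<and> real (card F) * \<beta> \<le> real k}"
    have "finite light"
      unfolding light_def by (rule finite_subset[of _ "Pow {..<m}"]) auto
    show ?thesis
    proof (rule ccontr)
      assume "\<not> r * card Y < 12 * T"
      define \<F> where "\<F> = {F \<in> light. 12 * card (Y \<inter> \<Union>(R ` F)) \<le> card Y}"
      have "finite \<F>"
        unfolding \<F>_def using \<open>finite light\<close> by simp
      have "12 ^ k \<le> card ((\<lambda>F. Y \<inter> \<Union>(R ` F)) ` \<F>)"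
      proof (rule card_ge_power_if_covers_k_subsets)
        show "finite Y" "k \<le> card Y" "finite ((\<lambda>F. Y \<inter> \<Union>(R ` F)) ` \<F>)" "1 \<le> (12::nat)"
          using \<open>finite Y\<close> False \<open>finite \<F>\<close> by auto
        fix D
        assume "D \<in> (\<lambda>F. Y \<inter> \<Union>(R ` F)) ` \<F>"
        then show "finite D \<and> 12 * card D \<le> card Y"
          using \<open>finite Y\<close> unfolding \<F>_def by auto
      next
        fix \<omega>
        assume "\<omega> \<subseteq> Y" "card \<omega> = k"
        moreover have "\<omega> \<noteq> {}"
          using \<open>card \<omega> = k\<close> \<open>1 \<le> k\<close> by auto
        ultimately obtain F where F: "F \<subseteq> {..<m}" "\<omega> \<subseteq> Y \<inter> \<Union>(R ` F)"
          "r * card (Y \<inter> \<Union>(R ` F)) < T" "real (card F) * \<beta> \<le> real k"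
          using light_cover[of \<omega>] by auto
        have "r * real (12 * card (Y \<inter> \<Union>(R ` F))) < r * real (card Y)"
          using F(3) \<open>\<not> r * card Y < 12 * T\<close> by simp
        then have "real (12 * card (Y \<inter> \<Union>(R ` F))) < real (card Y)"
          using \<open>0 \<le> r\<close> by (rule mult_left_less_imp_less)
        then have "F \<in> \<F>"
          using F(1,4) unfolding \<F>_def light_def by simp
        then show "\<exists>D\<in>(\<lambda>F. Y \<inter> \<Union>(R ` F)) ` \<F>. \<omega> \<subseteq> D"
          using F(2) by blast
      qed
      also have "\<dots> \<le> card \<F>"
        using \<open>finite \<F>\<close> by (rule card_image_le)
      also have "\<dots> \<le> card light"
        unfolding \<F>_def using \<open>finite light\<close> by (intro card_mono) auto
      also have "\<dots> < 12 ^ k"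
        unfolding light_def using beta \<open>1 \<le> k\<close> by (rule card_light_families_lt)
      finally show False
        by simp
    qed
  qed
qed

lemma finite_scenarios: "finite U \<Longrightarrow> finite (scenarios U k)"
  unfolding scenarios_def by (rule finite_subset[of _ "Pow U"]) auto

lemma scenario_superset:
  assumes "finite U" "Z \<subseteq> U" "card Z \<le> k" "k \<le> card U"
  obtains \<omega> where "\<omega> \<in> scenarios U k" "Z \<subseteq> \<omega>"
  using exists_subset_between[OF assms(3,4,2,1)] unfolding scenarios_def by blast

lemma second_stage_cost_ge:
  "finite U \<Longrightarrow> \<omega> \<in> scenarios U k \<Longrightarrow> sum c (E \<omega>) \<le> second_stage_cost U k c E"
  unfolding second_stage_cost_def by (intro Max_ge finite_imageI finite_scenarios imageI)

lemma second_stage_cost_nonneg: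
  assumes "finite U" "k \<le> card U" "rsc_feasible U R m k E0 E" "\<And>i. i < m \<Longrightarrow> 0 \<le> c i"
  shows "0 \<le> second_stage_cost U k c E"
proof -
  have "card {} \<le> k"
    by simp
  obtain \<omega> where \<omega>: "\<omega> \<in> scenarios U k" "{} \<subseteq> \<omega>"
    by (rule scenario_superset[OF \<open>finite U\<close> empty_subsetI \<open>card {} \<le> k\<close> \<open>k \<le> card U\<close>])
  then have "E \<omega> \<subseteq> {..<m}"
    using \<open>rsc_feasible U R m k E0 E\<close> unfolding rsc_feasible_def by blast
  then have "0 \<le> sum c (E \<omega>)"
    using assms(4) by (intro sum_nonneg) auto
  also have "\<dots> \<le> second_stage_cost U k c E"
    using \<open>finite U\<close> \<omega>(1) by (rule second_stage_cost_ge)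
  finally show ?thesis .
qed

lemma recourse_covers_outside_first_stage:
  assumes "finite U" "k \<le> card U" and feasible: "rsc_feasible U R m k E0 E"
    and "Z \<subseteq> U - \<Union>(R ` E0)" "card Z \<le> k"
  obtains \<omega> where "\<omega> \<in> scenarios U k" "E \<omega> \<subseteq> {..<m}" "Z \<subseteq> \<Union>(R ` E \<omega>)"
proof -
  have "Z \<subseteq> U"
    using \<open>Z \<subseteq> U - \<Union>(R ` E0)\<close> by blast
  obtain \<omega> where \<omega>: "\<omega> \<in> scenarios U k" "Z \<subseteq> \<omega>"
    by (rule scenario_superset[OF \<open>finite U\<close> \<open>Z \<subseteq> U\<close> \<open>card Z \<le> k\<close> \<open>k \<le> card U\<close>])
  then have "Z \<subseteq> \<Union>(R ` (E0 \<union> E \<omega>))" "E \<omega> \<subseteq> {..<m}"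
    using feasible unfolding rsc_feasible_def by blast+
  then have "Z \<subseteq> \<Union>(R ` E \<omega>)"
    using \<open>Z \<subseteq> U - \<Union>(R ` E0)\<close> by blast
  with \<omega>(1) \<open>E \<omega> \<subseteq> {..<m}\<close> show ?thesis
    by (rule that)
qed

lemma min_cover_cost_le: "i < m \<Longrightarrow> v \<in> R i \<Longrightarrow> min_cover_cost R m c v \<le> c i"
  unfolding min_cover_cost_def by (intro Min_le) auto

lemma exists_cheap_set:
  fixes U :: "'a set" and R :: "nat \<Rightarrow> 'a set" and b c :: "nat \<Rightarrow> real" and T T' \<beta> :: real
  assumes "finite U" "1 \<le> k" "k \<le> card U" and beta: "\<beta> \<ge> 36 * ln (real m)"
    and b_nonneg: "\<forall>i<m. 0 \<le> b i" and b_le_c: "\<forall>i<m. b i \<le> c i"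
    and feasible: "rsc_feasible U R m k E0 E"
    and "0 \<le> T'" and second_stage: "\<And>\<omega>. \<omega> \<in> scenarios U k \<Longrightarrow> sum c (E \<omega>) \<le> T'"
    and "T' \<le> T"
    and "Y \<subseteq> U" "Y \<noteq> {}"
    and expensive: "\<And>v i. v \<in> Y \<Longrightarrow> i < m \<Longrightarrow> v \<in> R i \<Longrightarrow> \<beta> * T / k \<le> c i"
  shows "\<exists>i<m. R i \<inter> Y \<noteq> {} \<and> b i / card (R i \<inter> Y) \<le> (sum b E0 + 12 * T') / card Y"
proof (rule ccontr)
  define Q where "Q = sum b E0 + 12 * T'"
  define r where "r = Q / card Y"
  assume no_cheap: "\<not> ?thesis"
  have dense: "r * card (R i \<inter> Y) < b i" if "i < m" "R i \<inter> Y \<noteq> {}" for i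
  proof -
    have "0 < card (R i \<inter> Y)"
      using that \<open>Y \<subseteq> U\<close> \<open>finite U\<close> by (simp add: card_gt_0_iff finite_subset)
    moreover have "r < b i / card (R i \<inter> Y)"
      using no_cheap that unfolding r_def Q_def by auto
    ultimately show ?thesis
      by (simp add: field_simps)
  qed
  have "0 \<le> ln (real m)"
    by (cases m) auto
  with beta have "0 \<le> \<beta>"
    by linarith
  have E0: "E0 \<subseteq> {..<m}" "finite E0"
    using feasible unfolding rsc_feasible_def by (auto intro: finite_subset[OF _ finite_lessThan])
  have "finite Y"
    using \<open>Y \<subseteq> U\<close> \<open>finite U\<close> by (rule finite_subset)
  have "0 \<le> sum b E0"
    using E0 b_nonneg by (auto intro: sum_nonneg)
  then have "0 \<le> Q"
    unfolding Q_def using \<open>0 \<le> T'\<close> by simp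
  then have "0 \<le> r"
    unfolding r_def by simp
  have r_Y: "r * card Y = Q"
    unfolding r_def using \<open>finite Y\<close> \<open>Y \<noteq> {}\<close> by simp
  define Y0 where "Y0 = Y \<inter> \<Union>(R ` E0)"
  define Y' where "Y' = Y - \<Union>(R ` E0)"
  have covered_strict: "r * card Y0 < sum b E0" if "Y0 \<noteq> {}"
    unfolding Y0_def using E0 b_nonneg dense that
    by (intro weighted_card_covered_less_sum \<open>0 \<le> r\<close>) (auto simp: Y0_def)
  have rest_strict: "r * card Y' < 12 * T'" if "Y' \<noteq> {}"
  proof (rule second_stage_density_bound[OF _ that \<open>1 \<le> k\<close> beta \<open>0 \<le> r\<close>])
    show "finite Y'"
      unfolding Y'_def using \<open>finite Y\<close> by simp
    fix i
    assume "i < m"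
    then show "0 \<le> c i"
      using b_nonneg b_le_c by (meson order_trans)
    assume "R i \<inter> Y' \<noteq> {}"
    then have "R i \<inter> Y \<noteq> {}" "card (R i \<inter> Y') \<le> card (R i \<inter> Y)"
      unfolding Y'_def using \<open>finite Y\<close> by (auto intro!: card_mono)
    then have "r * card (R i \<inter> Y') \<le> r * card (R i \<inter> Y)"
      using \<open>0 \<le> r\<close> by (simp add: mult_left_mono)
    then show "r * card (R i \<inter> Y') < c i"
      using dense[OF \<open>i < m\<close> \<open>R i \<inter> Y \<noteq> {}\<close>] b_le_c \<open>i < m\<close> by fastforce
    obtain v where "v \<in> Y" "v \<in> R i"
      using \<open>R i \<inter> Y \<noteq> {}\<close> by blast
    then have "\<beta> * T / k \<le> c i"
      using expensive \<open>i < m\<close> by blast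
    moreover have "\<beta> * T' / k \<le> \<beta> * T / k"
      using \<open>T' \<le> T\<close> \<open>0 \<le> \<beta>\<close> by (intro divide_right_mono mult_left_mono) auto
    ultimately show "\<beta> * T' / k \<le> c i"
      by linarith
  next
    fix Z
    assume "Z \<subseteq> Y'" "card Z \<le> k"
    then have "Z \<subseteq> U - \<Union>(R ` E0)"
      unfolding Y'_def using \<open>Y \<subseteq> U\<close> by blast
    obtain \<omega> where "\<omega> \<in> scenarios U k" "E \<omega> \<subseteq> {..<m}" "Z \<subseteq> \<Union>(R ` E \<omega>)"
      by (rule recourse_covers_outside_first_stage[OF \<open>finite U\<close> \<open>k \<le> card U\<close> feasible
            \<open>Z \<subseteq> U - \<Union>(R ` E0)\<close> \<open>card Z \<le> k\<close>])
    then show "\<exists>F\<subseteq>{..<m}. Z \<subseteq> \<Union>(R ` F) \<and> sum c F \<le> T'"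
      using second_stage by blast
  qed
  have covered: "r * card Y0 \<le> sum b E0"
    using covered_strict \<open>0 \<le> sum b E0\<close> by (cases "Y0 = {}") force+
  have rest: "r * card Y' \<le> 12 * T'"
    using rest_strict \<open>0 \<le> T'\<close> by (cases "Y' = {}") force+
  have "card Y = card Y0 + card Y'"
    unfolding Y0_def Y'_def using \<open>finite Y\<close> by (rule card_Int_Diff)
  then have split: "r * card Y = r * card Y0 + r * card Y'"
    by (simp add: distrib_left)
  have "Y0 \<noteq> {} \<or> Y' \<noteq> {}"
    using \<open>Y \<noteq> {}\<close> unfolding Y0_def Y'_def by blast
  then have "r * card Y < Q"
  proof
    assume "Y0 \<noteq> {}"
    then show ?thesis
      using split covered_strict rest unfolding Q_def by linarith
  next
    assume "Y' \<noteq> {}"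
    then show ?thesis
      using split covered rest_strict unfolding Q_def by linarith
  qed
  with r_Y show False
    by simp
qed

theorem mainTheorem18:
  fixes U :: "'a set" and R :: "nat \<Rightarrow> 'a set" and m k :: nat
    and b c :: "nat \<Rightarrow> real" and T \<beta> :: real
    and E0 :: "nat set" and E :: "'a set \<Rightarrow> nat set" and S :: "'a set" and \<Phi> :: "nat set"
  assumes finU: "finite U"
    and sets_in_U: "\<forall>i<m. R i \<subseteq> U"
    and b_nonneg: "\<forall>i<m. 0 \<le> b i"
    and b_le_c: "\<forall>i<m. b i \<le> c i"
    and k_ge: "1 \<le> k" and k_le: "k \<le> card U"
    and T_nonneg: "0 \<le> T"
    and beta: "\<beta> \<ge> 36 * ln (real m)"
    and S_def: "S = {v \<in> U. min_cover_cost R m c v \<ge> \<beta> * T / real k}"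
    and greedy: "greedy_cover R m b S \<Phi>"
    and opt: "rsc_optimal U R m k b c E0 E"
    and T_ge: "T \<ge> second_stage_cost U k c E"
  shows "sum b \<Phi> \<le> harm (card U) * (sum b E0 + 12 * second_stage_cost U k c E)"
proof -
  define T' where "T' = second_stage_cost U k c E"
  have feasible: "rsc_feasible U R m k E0 E"
    using opt unfolding rsc_optimal_def by blast
  have second_stage: "sum c (E \<omega>) \<le> T'" if "\<omega> \<in> scenarios U k" for \<omega>
    unfolding T'_def using finU that by (rule second_stage_cost_ge)
  have c_nonneg: "0 \<le> c i" if "i < m" for i
    using b_nonneg b_le_c that by (meson order_trans)
  have "0 \<le> T'"
    unfolding T'_def using finU k_le feasible c_nonneg by (rule second_stage_cost_nonneg)
  have "0 \<le> sum b E0"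
    using feasible b_nonneg unfolding rsc_feasible_def by (intro sum_nonneg) auto
  have "finite S" "S \<subseteq> U"
    using finU unfolding S_def by auto
  have "sum b \<Phi> \<le> harm (card S) * (sum b E0 + 12 * T')"
  proof (rule greedy_cover_cost_le[OF greedy \<open>finite S\<close> b_nonneg])
    show "0 \<le> sum b E0 + 12 * T'"
      using \<open>0 \<le> sum b E0\<close> \<open>0 \<le> T'\<close> by simp
    fix Y
    assume "Y \<subseteq> S" "Y \<noteq> {}"
    have expensive: "\<beta> * T / k \<le> c i" if "v \<in> Y" "i < m" "v \<in> R i" for v i
    proof -
      have "\<beta> * T / k \<le> min_cover_cost R m c v"
        using \<open>Y \<subseteq> S\<close> \<open>v \<in> Y\<close> unfolding S_def by auto
      also have "\<dots> \<le> c i"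
        using that(2,3) by (rule min_cover_cost_le)
      finally show ?thesis .
    qed
    have "T' \<le> T" "Y \<subseteq> U"
      using T_ge \<open>Y \<subseteq> S\<close> \<open>S \<subseteq> U\<close> unfolding T'_def by auto
    from exists_cheap_set[OF finU k_ge k_le beta b_nonneg b_le_c feasible \<open>0 \<le> T'\<close>
        second_stage this \<open>Y \<noteq> {}\<close> expensive]
    show "\<exists>i<m. R i \<inter> Y \<noteq> {} \<and> b i / card (R i \<inter> Y) \<le> (sum b E0 + 12 * T') / card Y" .
  qed
  also have "\<dots> \<le> harm (card U) * (sum b E0 + 12 * T')"
    using \<open>S \<subseteq> U\<close> finU \<open>0 \<le> sum b E0\<close> \<open>0 \<le> T'\<close>
    by (intro mult_right_mono harm_mono card_mono) auto
  finally show ?thesis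
    unfolding T'_def .
qed

end
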